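(* For every $\varepsilon>0$ and every integer $d\ge1$ there exist $R_0,T_0$ such that for all integers $R\ge R_0$ and $T\ge T_0$ the following holds: for every unit vector $\ket\phi=\sum_{j=1}^d c_j\ket j\in\mathbb C^d$ (with arbitrary complex $c_j$) there exists a permutation $\pi$ of $[T]\times[d]\times[R]$ such that $$\operatorname{Re}\Big[(\bra{\vartheta_T}\otimes\bra{\mu_R})\,P_\pi\,(\ket{\vartheta_T}\otimes\ket\phi\otimes\ket{\mu_R})\Big]\ \ge\ 1-\varepsilon,$$ where $\ket{\vartheta_T}\otimes\ket{\mu_R}$ is regarded as a vector of $\mathbb C^T\otimes\mathbb C^d\otimes\mathbb C^R$ via the embedding $\ket t\otimes\ket r\mapsto\ket t\otimes\ket 1\otimes\ket r$.
   Context: $[d]=\{1,\dots,d\}$ and $\{\ket 1,\dots,\ket d\}$ is the computational basis of $\mathbb C^d$. For an integer $R$, $\ket{\mu_R}=\chi_R^{-1/2}\sum_{r=1}^R r^{-1/2}\ket r\in\mathbb C^R$, where $\chi_R=\sum_{r=1}^R r^{-1}$. For an integer $T$ and $\omega=e^{2\pi i/T}$, $\ket{\vartheta_T}=T^{-1/2}\sum_{t=1}^T\omega^t\ket t\in\mathbb C^T$. For a permutation $\pi$ of a finite index set $X$, $P_\pi$ is the permutation matrix on $\mathbb C^X$ with $P_\pi\ket x=\ket{\pi(x)}$; here $\mathbb C^T\otimes\mathbb C^d\otimes\mathbb C^R$ is identified with $\mathbb C^{[T]\times[d]\times[R]}$ via $\ket t\otimes\ket j\otimes\ket r\leftrightarrow\ket{(t,j,r)}$.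 *)

theory Defs
  imports "HOL-Analysis.Analysis" "HOL-Combinatorics.Permutations"
begin

text \<open>Vectors in C^X are represented as functions X \<Rightarrow> complex; only values on the
index set matter.\<close>

definition chi :: "nat \<Rightarrow> real" where
  "chi R = (\<Sum>r=1..R. 1 / real r)"

definition mu :: "nat \<Rightarrow> nat \<Rightarrow> complex" where
  "mu R r = (if r \<in> {1..R} then complex_of_real (1 / sqrt (chi R) * (1 / sqrt (real r))) else 0)"

definition vartheta :: "nat \<Rightarrow> nat \<Rightarrow> complex" where
  "vartheta T t = (if t \<in> {1..T} then
      complex_of_real (1 / sqrt (real T)) * exp (2 * complex_of_real pi * \<i> / of_nat T) ^ t else 0)"

definition index_set :: "nat \<Rightarrow> nat \<Rightarrow> nat \<Rightarrow> (nat \<times> nat \<times> nat) set" where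
  "index_set T d R = {1..T} \<times> {1..d} \<times> {1..R}"

definition in_state :: "nat \<Rightarrow> nat \<Rightarrow> (nat \<Rightarrow> complex) \<Rightarrow> nat \<times> nat \<times> nat \<Rightarrow> complex" where
  "in_state T R c = (\<lambda>(t, j, r). vartheta T t * c j * mu R r)"

definition out_state :: "nat \<Rightarrow> nat \<Rightarrow> nat \<times> nat \<times> nat \<Rightarrow> complex" where
  "out_state T R = (\<lambda>(t, j, r). vartheta T t * (if j = 1 then 1 else 0) * mu R r)"

text \<open>Inner product <w| P_pi |v> where P_pi |x> = |pi x>:
  P_pi v = sum_x v x |pi x>, so <w|P_pi v> = sum_x conj (w (pi x)) * v x.\<close>
definition perm_amp :: "(nat \<times> nat \<times> nat) set \<Rightarrow> (nat \<times> nat \<times> nat \<Rightarrow> nat \<times> nat \<times> nat)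
    \<Rightarrow> (nat \<times> nat \<times> nat \<Rightarrow> complex) \<Rightarrow> (nat \<times> nat \<times> nat \<Rightarrow> complex) \<Rightarrow> complex" where
  "perm_amp X \<pi> w v = (\<Sum>x\<in>X. cnj (w (\<pi> x)) * v x)"

end

theory Submission
  imports Defs "HOL-Real_Asymp.Real_Asymp"
begin

text \<open>Write \<open>a\<^sub>j = |c\<^sub>j|\<^sup>2\<close>. The permutation acts on \<open>[T]\<close> by a cyclic shift \<open>s\<^sub>j\<close> that
  rotates the phase of \<open>c\<^sub>j\<close> to within \<open>\<pi>/T\<close> of the positive axis, costing a factor
  \<open>cos (\<pi>/T)\<close>. On \<open>[d] \<times> [R]\<close> it sends the pairs \<open>(j, r)\<close> with \<open>r \<le> a\<^sub>j R\<close>, ranked by the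
  key \<open>r / a\<^sub>j\<close>, injectively to \<open>(1, g)\<close>; since at most \<open>\<Sum>\<^sub>j a\<^sub>j x = x\<close> pairs have key \<open>\<le> x\<close>,
  the rank satisfies \<open>g \<le> r / a\<^sub>j\<close>. Each such pair then contributes at least
  \<open>a\<^sub>j / (r \<chi>\<^sub>R)\<close>, and summing the harmonic series gives
  \<open>\<Sum>\<^sub>j a\<^sub>j H(\<lfloor>a\<^sub>j R\<rfloor>) / \<chi>\<^sub>R \<ge> (ln R - d) / (1 + ln R)\<close>, which tends to 1.\<close>

subsection \<open>Harmonic sums\<close>

lemma chi_eq_harm: "chi R = harm R"
  by (simp add: chi_def harm_def divide_inverse)

lemma harm_le_one_plus_ln: "n \<ge> 1 \<Longrightarrow> harm n \<le> 1 + ln (real n)"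
proof -
  assume "n \<ge> 1"
  then obtain m where m: "n = Suc m" by (cases n) auto
  have "harm (Suc m) - ln (real (Suc m)) \<le> harm (Suc 0) - ln (real (Suc 0))"
    using decseq_harm_diff_ln unfolding decseq_def by (metis le0)
  then show ?thesis using m by (simp add: harm_def)
qed

lemma mult_harm_floor_ge:
  assumes x: "0 < x" and R: "R \<ge> 1"
  shows "x * ln (real R) - 1 \<le> x * harm (nat \<lfloor>x * real R\<rfloor>)"
proof -
  have xR: "x * real R > 0" using x R by simp
  have "ln (x * real R) \<le> ln (real (nat \<lfloor>x * real R\<rfloor>) + 1)"
    using xR by (subst ln_le_cancel_iff) linarith+
  also have "\<dots> \<le> harm (nat \<lfloor>x * real R\<rfloor>)" by (rule ln_le_harm)
  finally have h: "ln x + ln (real R) \<le> harm (nat \<lfloor>x * real R\<rfloor>)"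
    using x R by (simp add: ln_mult)
  have "ln (1 / x) \<le> 1 / x - 1" using x by (intro ln_le_minus_one) simp
  then have "x * (- ln x) \<le> x * (1 / x - 1)" using x by (intro mult_left_mono) (auto simp: ln_div)
  moreover have "x * (1 / x - 1) = 1 - x" using x by (simp add: field_simps)
  ultimately have "x - 1 \<le> x * ln x" by linarith
  then have "x * ln (real R) - 1 \<le> x * ln x + x * ln (real R)" using x by linarith
  also have "\<dots> = x * (ln x + ln (real R))" by (simp add: distrib_left)
  also have "\<dots> \<le> x * harm (nat \<lfloor>x * real R\<rfloor>)" using h x by (intro mult_left_mono) auto
  finally show ?thesis .
qed

definition short_pairs :: "(nat \<Rightarrow> real) \<Rightarrow> nat \<Rightarrow> nat \<Rightarrow> (nat \<times> nat) set" where
  "short_pairs a d R = Sigma {j \<in> {1..d}. a j > 0} (\<lambda>j. {r \<in> {1..R}. real r \<le> a j * real R})"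

lemma short_pairs_subset: "short_pairs a d R \<subseteq> {1..d} \<times> {1..R}"
  unfolding short_pairs_def by auto

lemma Collect_le_mult_eq_atLeastAtMost:
  assumes "0 \<le> x" "x \<le> 1"
  shows "{r \<in> {1..R}. real r \<le> x * real R} = {1..nat \<lfloor>x * real R\<rfloor>}"
proof -
  have "x * real R \<le> real R" using assms by (simp add: mult_left_le_one_le)
  then have "nat \<lfloor>x * real R\<rfloor> \<le> R" by linarith
  moreover have "real (nat \<lfloor>x * real R\<rfloor>) \<le> x * real R" using assms by (intro of_nat_floor) simp
  ultimately show ?thesis by (auto simp: le_nat_floor intro: order_trans[of _ "real (nat _)"])
qed

lemma sum_short_pairs_eq:
  assumes nn: "\<And>j. a j \<ge> 0" and s1: "(\<Sum>j=1..d. a j) = 1"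
  shows "(\<Sum>p\<in>short_pairs a d R. a (fst p) / (real (snd p) * chi R))
       = (\<Sum>j\<in>{j \<in> {1..d}. a j > 0}. a j * harm (nat \<lfloor>a j * real R\<rfloor>)) / chi R"
proof -
  have a1: "a j \<le> 1" if "j \<in> {1..d}" for j
    using member_le_sum[of j "{1..d}" a] nn that s1 by auto
  have inner: "(\<Sum>r\<in>{r \<in> {1..R}. real r \<le> a j * real R}. a j / (real r * chi R))
      = a j * harm (nat \<lfloor>a j * real R\<rfloor>) / chi R" if "j \<in> {1..d}" for j
    using Collect_le_mult_eq_atLeastAtMost[OF nn a1[OF that]]
    by (simp add: harm_def sum_distrib_left sum_divide_distrib divide_inverse mult_ac)
  have "(\<Sum>p\<in>short_pairs a d R. a (fst p) / (real (snd p) * chi R))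
      = (\<Sum>j\<in>{j \<in> {1..d}. a j > 0}. \<Sum>r\<in>{r \<in> {1..R}. real r \<le> a j * real R}. a j / (real r * chi R))"
    unfolding short_pairs_def by (subst sum.Sigma) (auto simp: split_def)
  also have "\<dots> = (\<Sum>j\<in>{j \<in> {1..d}. a j > 0}. a j * harm (nat \<lfloor>a j * real R\<rfloor>) / chi R)"
    by (rule sum.cong[OF refl], rule inner) simp
  finally show ?thesis by (simp add: sum_divide_distrib)
qed

lemma sum_short_pairs_ge:
  assumes nn: "\<And>j. a j \<ge> 0" and s1: "(\<Sum>j=1..d. a j) = 1"
    and R: "R \<ge> 1" and lnR: "ln (real R) \<ge> real d"
  shows "(ln (real R) - real d) / (1 + ln (real R))
       \<le> (\<Sum>p\<in>short_pairs a d R. a (fst p) / (real (snd p) * chi R))"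
proof -
  define J where "J = {j \<in> {1..d}. a j > 0}"
  have chi_pos: "chi R > 0" using R by (simp add: chi_eq_harm)
  have chi_le: "chi R \<le> 1 + ln (real R)" using harm_le_one_plus_ln[OF R] by (simp add: chi_eq_harm)
  have "(\<Sum>j=1..d. a j) = (\<Sum>j\<in>J. a j)"
    unfolding J_def using nn by (intro sum.mono_neutral_right) (auto simp: order.order_iff_strict)
  then have sJ: "(\<Sum>j\<in>J. a j * ln (real R)) = ln (real R)"
    using s1 by (simp add: sum_distrib_right[symmetric])
  have "card J \<le> card {1..d}" by (intro card_mono) (auto simp: J_def)
  then have "ln (real R) - real d \<le> (\<Sum>j\<in>J. a j * ln (real R)) - real (card J)"
    using sJ by simp
  also have "\<dots> = (\<Sum>j\<in>J. a j * ln (real R) - 1)" by (simp add: sum_subtractf)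
  also have "\<dots> \<le> (\<Sum>j\<in>J. a j * harm (nat \<lfloor>a j * real R\<rfloor>))"
    using R by (intro sum_mono mult_harm_floor_ge) (auto simp: J_def)
  finally have num: "ln (real R) - real d \<le> (\<Sum>j\<in>J. a j * harm (nat \<lfloor>a j * real R\<rfloor>))" .
  have "(ln (real R) - real d) / (1 + ln (real R)) \<le> (ln (real R) - real d) / chi R"
    using chi_pos chi_le lnR by (intro divide_left_mono) auto
  also have "\<dots> \<le> (\<Sum>j\<in>J. a j * harm (nat \<lfloor>a j * real R\<rfloor>)) / chi R"
    using num chi_pos by (intro divide_right_mono) auto
  finally show ?thesis unfolding sum_short_pairs_eq[OF nn s1] J_def .
qed

subsection \<open>Ranking the short pairs\<close>

lemma exists_inj_rank_le_card_key:
  fixes k :: "'a \<Rightarrow> 'b::linorder"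
  assumes "finite D"
  shows "\<exists>g. inj_on g D \<and> (\<forall>p\<in>D. 1 \<le> g p \<and> g p \<le> card {q \<in> D. k q \<le> k p})"
  using assms
proof (induction "card D" arbitrary: D)
  case 0
  then show ?case by auto
next
  case (Suc n)
  then have "Max (k ` D) \<in> k ` D" by (intro Max_in) auto
  then obtain m where m: "m \<in> D" "k m = Max (k ` D)" by (metis imageE)
  have top: "k q \<le> k m" if "q \<in> D" for q
    using that m(2) Suc.prems by simp
  have card_rest: "card (D - {m}) = n" using Suc m by simp
  obtain g where inj: "inj_on g (D - {m})"
    and g: "\<forall>p\<in>D - {m}. 1 \<le> g p \<and> g p \<le> card {q \<in> D - {m}. k q \<le> k p}"
    using Suc.hyps(1)[OF card_rest[symmetric]] Suc.prems by auto
  have g_le: "g p \<le> n" if "p \<in> D - {m}" for p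
  proof -
    have "card {q \<in> D - {m}. k q \<le> k p} \<le> card (D - {m})" using Suc.prems by (intro card_mono) auto
    then show ?thesis using g that card_rest by (meson le_trans)
  qed
  then have "Suc n \<notin> g ` (D - {m})" by fastforce
  have D_eq: "D = insert m (D - {m})" using m by auto
  have "inj_on (g(m := Suc n)) (insert m (D - {m}))"
    unfolding inj_on_insert using inj \<open>Suc n \<notin> g ` (D - {m})\<close>
    by (simp add: inj_on_fun_updI fun_upd_image)
  then have "inj_on (g(m := Suc n)) D" by (simp only: D_eq[symmetric])
  moreover have "1 \<le> (g(m := Suc n)) p \<and> (g(m := Suc n)) p \<le> card {q \<in> D. k q \<le> k p}"
    if p: "p \<in> D" for p
  proof (cases "p = m")
    case True
    have "{q \<in> D. k q \<le> k m} = D" using top by auto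
    then show ?thesis using True Suc.hyps(2) by simp
  next
    case False
    have "card {q \<in> D - {m}. k q \<le> k p} \<le> card {q \<in> D. k q \<le> k p}"
      using Suc.prems by (intro card_mono) auto
    moreover have "1 \<le> g p" "g p \<le> card {q \<in> D - {m}. k q \<le> k p}" using g False p by auto
    ultimately show ?thesis using False by simp
  qed
  ultimately show ?case by blast
qed

lemma card_pairs_below_le:
  fixes a :: "nat \<Rightarrow> real" and d :: nat
  assumes nn: "\<And>j. a j \<ge> 0" and s1: "(\<Sum>j=1..d. a j) = 1" and x: "x \<ge> 0"
  shows "real (card {p \<in> {1..d} \<times> {1..R}. real (snd p) \<le> a (fst p) * x}) \<le> x"
proof -
  have row: "real (card {r \<in> {1..R}. real r \<le> y}) \<le> y" if "y \<ge> 0" for y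
  proof -
    have "card {r \<in> {1..R}. real r \<le> y} \<le> card {1..nat \<lfloor>y\<rfloor>}"
      using that by (intro card_mono) (auto simp: le_nat_floor)
    then show ?thesis using that by simp linarith
  qed
  have eq: "{p \<in> {1..d} \<times> {1..R}. real (snd p) \<le> a (fst p) * x}
      = Sigma {1..d} (\<lambda>j. {r \<in> {1..R}. real r \<le> a j * x})" by auto
  have "card {p \<in> {1..d} \<times> {1..R}. real (snd p) \<le> a (fst p) * x}
      = (\<Sum>j=1..d. card {r \<in> {1..R}. real r \<le> a j * x})"
    unfolding eq by (rule card_SigmaI) simp_all
  then have "real (card {p \<in> {1..d} \<times> {1..R}. real (snd p) \<le> a (fst p) * x})
      = (\<Sum>j=1..d. real (card {r \<in> {1..R}. real r \<le> a j * x}))"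
    by simp
  also have "\<dots> \<le> (\<Sum>j=1..d. a j * x)" using nn x by (intro sum_mono row) auto
  also have "\<dots> = x" using s1 by (simp add: sum_distrib_right[symmetric])
  finally show ?thesis .
qed

lemma inj_on_extend_bij_betw:
  assumes A: "finite A" and S: "S \<subseteq> A" and inj: "inj_on h S" and img: "h ` S \<subseteq> A"
  shows "\<exists>f. bij_betw f A A \<and> (\<forall>p\<in>S. f p = h p)"
proof -
  have fS: "finite S" using A S finite_subset by blast
  have "card (A - S) = card (A - h ` S)"
    using card_Diff_subset[OF fS S] card_Diff_subset[OF finite_imageI[OF fS] img] card_image[OF inj]
    by simp
  then obtain e where e: "bij_betw e (A - S) (A - h ` S)"
    using finite_same_card_bij A by (meson finite_Diff)
  define f where "f p = (if p \<in> S then h p else e p)" for p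
  have "bij_betw f S (h ` S)"
    using inj_on_imp_bij_betw[OF inj] by (rule bij_betw_cong[THEN iffD1, rotated]) (simp add: f_def)
  moreover have "bij_betw f (A - S) (A - h ` S)"
    using e by (rule bij_betw_cong[THEN iffD1, rotated]) (simp add: f_def)
  ultimately have "bij_betw f (S \<union> (A - S)) (h ` S \<union> (A - h ` S))"
    by (rule bij_betw_combine) auto
  moreover have "S \<union> (A - S) = A" "h ` S \<union> (A - h ` S) = A" using S img by auto
  ultimately show ?thesis unfolding f_def by auto
qed

lemma exists_bij_short_pairs_to_first_row:
  assumes d: "d \<ge> 1" and nn: "\<And>j. a j \<ge> 0" and s1: "(\<Sum>j=1..d. a j) = 1"
  shows "\<exists>f. bij_betw f ({1..d} \<times> {1..R}) ({1..d} \<times> {1..R}) \<and>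
           (\<forall>p\<in>short_pairs a d R. fst (f p) = 1 \<and> 1 \<le> snd (f p) \<and>
              real (snd (f p)) * a (fst p) \<le> real (snd p))"
proof -
  define A where "A = {1..d} \<times> {1..R}"
  define D where "D = {p \<in> A. a (fst p) > 0}"
  define k where "k p = real (snd p) / a (fst p)" for p
  obtain g where g_inj: "inj_on g D" and g: "\<forall>p\<in>D. 1 \<le> g p \<and> g p \<le> card {q \<in> D. k q \<le> k p}"
    using exists_inj_rank_le_card_key[of D k] by (auto simp: D_def A_def)
  have SD: "short_pairs a d R \<subseteq> D" by (auto simp: short_pairs_def D_def A_def)
  have g_bound: "1 \<le> g p \<and> real (g p) \<le> k p \<and> g p \<le> R" if p: "p \<in> short_pairs a d R" for p
  proof -
    have pos: "a (fst p) > 0" and "real (snd p) \<le> a (fst p) * real R"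
      using p by (auto simp: short_pairs_def)
    then have kR: "k p \<le> real R" by (simp add: k_def divide_le_eq mult.commute)
    have "{q \<in> D. k q \<le> k p} \<subseteq> {q \<in> A. real (snd q) \<le> a (fst q) * k p}"
      by (auto simp: D_def k_def divide_le_eq mult.commute)
    then have "card {q \<in> D. k q \<le> k p} \<le> card {q \<in> A. real (snd q) \<le> a (fst q) * k p}"
      by (intro card_mono) (auto simp: A_def)
    moreover have "real (card {q \<in> A. real (snd q) \<le> a (fst q) * k p}) \<le> k p"
      unfolding A_def using pos nn s1 by (intro card_pairs_below_le) (auto simp: k_def)
    moreover have "g p \<le> card {q \<in> D. k q \<le> k p}" using g SD p by auto
    ultimately have "real (g p) \<le> k p" by (meson le_trans of_nat_le_iff order_trans)
    then show ?thesis using g SD p kR by auto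
  qed
  define h where "h p = (1::nat, g p)" for p
  have "inj_on h (short_pairs a d R)"
    using inj_on_subset[OF g_inj SD] by (auto simp: h_def inj_on_def)
  moreover have "h ` short_pairs a d R \<subseteq> A" using g_bound d by (auto simp: h_def A_def)
  ultimately obtain f where f: "bij_betw f A A" and fh: "\<forall>p\<in>short_pairs a d R. f p = h p"
    using inj_on_extend_bij_betw[of A "short_pairs a d R" h] short_pairs_subset
    by (auto simp: A_def)
  have "real (g p) * a (fst p) \<le> real (snd p)" if "p \<in> short_pairs a d R" for p
    using g_bound[OF that] that by (auto simp: short_pairs_def k_def le_divide_eq)
  then show ?thesis using f fh g_bound unfolding A_def h_def by auto
qed

subsection \<open>Phases\<close>

definition omega :: "nat \<Rightarrow> complex" where
  "omega T = exp (2 * complex_of_real pi * \<i> / of_nat T)"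

definition cshift :: "nat \<Rightarrow> nat \<Rightarrow> nat \<Rightarrow> nat" where
  "cshift T s t = (if t + s \<le> T then t + s else t + s - T)"

lemma cshift_in: "s \<le> T \<Longrightarrow> t \<in> {1..T} \<Longrightarrow> cshift T s t \<in> {1..T}"
  unfolding cshift_def by auto

lemma inj_on_cshift: "s \<le> T \<Longrightarrow> inj_on (cshift T s) {1..T}"
  unfolding cshift_def inj_on_def by auto

lemma omega_power_cshift:
  assumes "s \<le> T" "t \<in> {1..T}"
  shows "omega T ^ cshift T s t = omega T ^ (t + s)"
proof -
  have "omega T ^ T = 1"
    using assms by (simp add: omega_def exp_of_nat_mult[symmetric])
  moreover have "omega T ^ (t + s) = omega T ^ (t + s - T) * omega T ^ T" if "\<not> t + s \<le> T"
    using that by (simp flip: power_add)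
  ultimately show ?thesis by (simp add: cshift_def)
qed

lemma cnj_vartheta_cshift_mult:
  assumes s: "s \<le> T" and t: "t \<in> {1..T}"
  shows "cnj (vartheta T (cshift T s t)) * vartheta T t = cnj (omega T) ^ s / of_nat T"
proof -
  have "cmod (omega T) = 1" by (simp add: omega_def norm_exp_eq_Re)
  then have unit: "cnj (omega T) * omega T = 1"
    by (metis complex_norm_square mult.commute power_one of_real_1)
  have sqrt_T: "complex_of_real (sqrt (real T)) * complex_of_real (sqrt (real T)) = of_nat T"
    by (simp only: of_real_mult[symmetric] real_sqrt_mult_self) simp
  have "cnj (vartheta T (cshift T s t)) * vartheta T t
      = cnj (omega T) ^ s * (cnj (omega T) * omega T) ^ t / of_nat T"
    using cshift_in[OF s t] t omega_power_cshift[OF s t]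
    by (simp add: vartheta_def omega_def power_add power_mult_distrib sqrt_T[symmetric] mult_ac)
  then show ?thesis using unit by simp
qed

lemma Re_cnj_omega_power_mult:
  "Re (cnj (omega T) ^ s * c) = cmod c * cos (Arg c - 2 * pi * real s / real T)"
proof -
  have "omega T = cis (2 * pi / real T)"
    unfolding omega_def cis_conv_exp by (simp add: mult.commute mult.left_commute)
  then have "cnj (omega T) ^ s = cis (real s * - (2 * pi / real T))"
    by (simp add: cis_cnj Complex.DeMoivre)
  moreover have "c = complex_of_real (cmod c) * cis (Arg c)"
    using rcis_cmod_Arg[of c] unfolding rcis_def by simp
  ultimately have "cnj (omega T) ^ s * c = complex_of_real (cmod c) * cis (real s * - (2 * pi / real T) + Arg c)"
    by (metis cis_mult mult.left_commute)
  also have "real s * - (2 * pi / real T) + Arg c = Arg c - 2 * pi * real s / real T"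
    by (simp add: field_simps)
  finally show ?thesis by simp
qed

lemma exists_phase_shift:
  assumes T: "T \<ge> 1"
  shows "\<exists>s\<le>T. cmod c * cos (pi / real T) \<le> Re (cnj (omega T) ^ s * c)"
proof -
  define \<theta> where "\<theta> = (if Arg c < 0 then Arg c + 2 * pi else Arg c)"
  have \<theta>: "0 \<le> \<theta>" "\<theta> < 2 * pi"
    using mpi_less_Arg[of c] Arg_le_pi[of c] pi_gt3 unfolding \<theta>_def by auto
  have cos_\<theta>: "cos (Arg c - y) = cos (\<theta> - y)" for y
    using cos_periodic[of "Arg c - y"] by (simp add: \<theta>_def algebra_simps)
  define y where "y = \<theta> * real T / (2 * pi)"
  have y: "0 \<le> y" "y < real T" using \<theta> T unfolding y_def by (auto simp: field_simps)
  \<comment> \<open>Rounding may give \<open>s = T\<close>, which is harmless: it is the identity shift.\<close>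
  define s where "s = nat \<lfloor>y + 1/2\<rfloor>"
  have s_round: "\<bar>y - real s\<bar> \<le> 1/2" and "real s < real T + 1"
    using y unfolding s_def by linarith+
  then have sT: "s \<le> T" by linarith
  have "\<theta> - 2 * pi * real s / real T = (2 * pi / real T) * (y - real s)"
    unfolding y_def using T by (simp add: field_simps)
  then have "\<bar>\<theta> - 2 * pi * real s / real T\<bar> = (2 * pi / real T) * \<bar>y - real s\<bar>"
    by (simp add: abs_mult)
  also have "\<dots> \<le> (2 * pi / real T) * (1/2)" using s_round by (intro mult_left_mono) auto
  finally have "\<bar>\<theta> - 2 * pi * real s / real T\<bar> \<le> pi / real T" by simp
  moreover have "pi / real T \<le> pi" using T by (simp add: field_simps)
  ultimately have "cos (pi / real T) \<le> cos (Arg c - 2 * pi * real s / real T)"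
    unfolding cos_\<theta> cos_abs_real[of "\<theta> - _", symmetric] by (intro cos_monotone_0_pi_le) auto
  then show ?thesis
    using sT by (metis Re_cnj_omega_power_mult mult_left_mono norm_ge_zero)
qed

subsection \<open>The permutation and its amplitude\<close>

definition twist_perm :: "nat \<Rightarrow> 'a set \<Rightarrow> ('a \<Rightarrow> nat) \<Rightarrow> ('a \<Rightarrow> 'a) \<Rightarrow> nat \<times> 'a \<Rightarrow> nat \<times> 'a" where
  "twist_perm T A s f x = (if x \<in> {1..T} \<times> A then (cshift T (s (snd x)) (fst x), f (snd x)) else x)"

lemma twist_perm_permutes:
  assumes A: "finite A" and f: "bij_betw f A A" and s: "\<And>p. s p \<le> T"
  shows "twist_perm T A s f permutes {1..T} \<times> A"
proof (rule bij_imp_permutes)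
  let ?I = "{1..T} \<times> A"
  have "twist_perm T A s f ` ?I \<subseteq> ?I"
    using cshift_in[OF s] bij_betwE[OF f] by (auto simp: twist_perm_def)
  moreover have "inj_on (twist_perm T A s f) ?I"
  proof (rule inj_onI)
    fix x y assume x: "x \<in> ?I" and y: "y \<in> ?I" and eq: "twist_perm T A s f x = twist_perm T A s f y"
    then have "snd x = snd y"
      using bij_betw_imp_inj_on[OF f] by (auto simp: twist_perm_def dest: inj_onD)
    moreover then have "fst x = fst y"
      using eq x y inj_onD[OF inj_on_cshift[OF s]] by (auto simp: twist_perm_def)
    ultimately show "x = y" by (simp add: prod_eq_iff)
  qed
  moreover have "finite ?I" using A by simp
  ultimately show "bij_betw (twist_perm T A s f) ?I ?I"
    unfolding bij_betw_def using endo_inj_surj by blast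
next
  show "\<And>x. x \<notin> {1..T} \<times> A \<Longrightarrow> twist_perm T A s f x = x"
    by (simp add: twist_perm_def)
qed

definition mu_real :: "nat \<Rightarrow> nat \<Rightarrow> real" where
  "mu_real R r = (if r \<in> {1..R} then 1 / sqrt (chi R) * (1 / sqrt (real r)) else 0)"

text \<open>The weight with which the input basis vector \<open>p = (j, r)\<close> of \<open>[d] \<times> [R]\<close> contributes
  to the amplitude, apart from the factor \<open>c\<^sub>j\<close> and the phase picked up on \<open>[T]\<close>.\<close>
definition overlap :: "nat \<Rightarrow> (nat \<times> nat \<Rightarrow> nat \<times> nat) \<Rightarrow> nat \<times> nat \<Rightarrow> real" where
  "overlap R f p = (if fst (f p) = 1 then mu_real R (snd (f p)) else 0) * mu_real R (snd p)"

lemma chi_nonneg: "chi R \<ge> 0"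
  by (simp add: chi_eq_harm harm_nonneg)

lemma mu_eq_of_real: "mu R r = complex_of_real (mu_real R r)"
  by (simp add: mu_def mu_real_def)

lemma overlap_nonneg: "overlap R f p \<ge> 0"
  by (simp add: overlap_def mu_real_def chi_nonneg)

lemma overlap_first_row:
  assumes "fst (f p) = 1" "snd (f p) \<in> {1..R}" "snd p \<in> {1..R}"
  shows "overlap R f p = 1 / (chi R * sqrt (real (snd (f p)) * real (snd p)))"
  using assms by (simp add: overlap_def mu_real_def real_sqrt_mult chi_nonneg)

lemma perm_amp_twist_perm:
  assumes T: "T \<ge> 1" and s: "\<And>p. s p \<le> T"
  shows "perm_amp (index_set T d R) (twist_perm T ({1..d} \<times> {1..R}) s f) (out_state T R) (in_state T R c)
       = (\<Sum>p\<in>{1..d} \<times> {1..R}. cnj (omega T) ^ s p * c (fst p) * of_real (overlap R f p))"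
proof -
  let ?A = "{1..d} \<times> {1..R}"
  have summand: "cnj (out_state T R (twist_perm T ?A s f x)) * in_state T R c x
      = cnj (omega T) ^ s (snd x) * c (fst (snd x)) * of_real (overlap R f (snd x)) / of_nat T"
    if x: "x \<in> {1..T} \<times> ?A" for x
  proof -
    obtain t p where xtp: "x = (t, p)" and t: "t \<in> {1..T}" using x by auto
    have "cnj (out_state T R (twist_perm T ?A s f x)) * in_state T R c x
        = (cnj (vartheta T (cshift T (s p) t)) * vartheta T t) * c (fst p) * of_real (overlap R f p)"
      using x unfolding xtp by (cases p; cases "f p")
        (simp add: twist_perm_def out_state_def in_state_def overlap_def mu_eq_of_real mult_ac)
    then show ?thesis using cnj_vartheta_cshift_mult[OF s t] by (simp add: xtp)
  qed
  have "perm_amp (index_set T d R) (twist_perm T ?A s f) (out_state T R) (in_state T R c)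
      = (\<Sum>t\<in>{1..T}. \<Sum>p\<in>?A. cnj (omega T) ^ s p * c (fst p) * of_real (overlap R f p) / of_nat T)"
    unfolding perm_amp_def index_set_def sum.cartesian_product
    by (rule sum.cong[OF refl], subst summand) (simp_all add: split_beta)
  also have "\<dots> = (\<Sum>p\<in>?A. cnj (omega T) ^ s p * c (fst p) * of_real (overlap R f p))"
    using T by (simp add: sum_divide_distrib[symmetric])
  finally show ?thesis .
qed

lemma div_le_sqrt_div_sqrt:
  fixes a g r ch :: real
  assumes a: "0 < a" and g: "1 \<le> g" and ga: "g * a \<le> r" and ch: "0 < ch"
  shows "a / (r * ch) \<le> sqrt a / (ch * sqrt (g * r))"
proof -
  have r: "0 < r" using a g ga by (smt (verit) mult_pos_pos)
  have "g * r \<le> (r / a) * r" using ga a r by (intro mult_right_mono) (auto simp: field_simps)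
  then have "sqrt (g * r) \<le> sqrt (r * r / a)" by (intro real_sqrt_le_mono) simp
  also have "\<dots> = r / sqrt a" using r by (simp add: real_sqrt_divide)
  finally have "sqrt a / (ch * (r / sqrt a)) \<le> sqrt a / (ch * sqrt (g * r))"
    using a g r ch by (intro divide_left_mono mult_left_mono mult_pos_pos) auto
  then show ?thesis using a by (simp add: field_simps)
qed

lemma short_pair_le_overlap:
  assumes p: "p \<in> short_pairs a d R" and fp: "f p \<in> {1..d} \<times> {1..R}" and R: "R \<ge> 1"
    and row: "fst (f p) = 1" and rank: "1 \<le> snd (f p)" "real (snd (f p)) * a (fst p) \<le> real (snd p)"
  shows "a (fst p) / (real (snd p) * chi R) \<le> sqrt (a (fst p)) * overlap R f p"
proof -
  have "p \<in> {1..d} \<times> {1..R}" using p short_pairs_subset by blast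
  then have "overlap R f p = 1 / (chi R * sqrt (real (snd (f p)) * real (snd p)))"
    using fp row by (intro overlap_first_row) auto
  moreover have "a (fst p) > 0" using p by (auto simp: short_pairs_def)
  moreover have "chi R > 0" using R by (simp add: chi_eq_harm)
  ultimately show ?thesis
    using rank div_le_sqrt_div_sqrt[of "a (fst p)" "real (snd (f p))" "real (snd p)" "chi R"] by simp
qed

lemma cos_pi_div_nonneg: "T \<ge> 2 \<Longrightarrow> 0 \<le> cos (pi / real T)"
proof -
  assume "T \<ge> 2"
  then have "pi / real T \<le> pi / 2" by (intro divide_left_mono) auto
  moreover have "0 \<le> pi / real T" by simp
  ultimately show ?thesis using pi_gt_zero by (intro cos_ge_zero) linarith+
qed

lemma exists_perm_amp_ge:
  assumes d: "d \<ge> 1" and R: "R \<ge> 1" and T: "T \<ge> 2" and lnR: "ln (real R) \<ge> real d"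
    and c: "(\<Sum>j=1..d. (cmod (c j))\<^sup>2) = 1"
  shows "\<exists>\<pi>. \<pi> permutes index_set T d R \<and>
           cos (pi / real T) * ((ln (real R) - real d) / (1 + ln (real R)))
             \<le> Re (perm_amp (index_set T d R) \<pi> (out_state T R) (in_state T R c))"
proof -
  define a where "a j = (cmod (c j))\<^sup>2" for j
  let ?A = "{1..d} \<times> {1..R}"
  let ?S = "short_pairs a d R"
  obtain f where f: "bij_betw f ?A ?A" and f_short: "\<forall>p\<in>?S. fst (f p) = 1 \<and>
      1 \<le> snd (f p) \<and> real (snd (f p)) * a (fst p) \<le> real (snd p)"
    using exists_bij_short_pairs_to_first_row[OF d, of a R] c by (auto simp: a_def)
  have "\<forall>j. \<exists>s\<le>T. cmod (c j) * cos (pi / real T) \<le> Re (cnj (omega T) ^ s * c j)"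
    using exists_phase_shift T by simp
  then obtain s where s: "\<And>j. s j \<le> T"
    and s_phase: "\<And>j. cmod (c j) * cos (pi / real T) \<le> Re (cnj (omega T) ^ s j * c j)"
    by metis
  define \<pi> where "\<pi> = twist_perm T ?A (s \<circ> fst) f"
  have perm: "\<pi> permutes index_set T d R"
    unfolding \<pi>_def index_set_def by (rule twist_perm_permutes[OF _ f]) (auto simp: s)
  have cos_nonneg: "0 \<le> cos (pi / real T)" using T by (rule cos_pi_div_nonneg)
  have short: "a (fst p) / (real (snd p) * chi R) \<le> cmod (c (fst p)) * overlap R f p"
    if p: "p \<in> ?S" for p
  proof -
    have fp: "f p \<in> ?A" using p short_pairs_subset bij_betwE[OF f] by blast
    show ?thesis using short_pair_le_overlap[where f = f, OF p fp R] f_short p by (simp add: a_def)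
  qed
  have "cos (pi / real T) * ((ln (real R) - real d) / (1 + ln (real R)))
      \<le> cos (pi / real T) * (\<Sum>p\<in>?S. a (fst p) / (real (snd p) * chi R))"
    using sum_short_pairs_ge[of a d R] c R lnR cos_nonneg by (intro mult_left_mono) (auto simp: a_def)
  also have "\<dots> \<le> cos (pi / real T) * (\<Sum>p\<in>?A. cmod (c (fst p)) * overlap R f p)"
    using short short_pairs_subset cos_nonneg overlap_nonneg
    by (intro mult_left_mono order_trans[OF sum_mono sum_mono2]) auto
  also have "\<dots> \<le> (\<Sum>p\<in>?A. Re (cnj (omega T) ^ s (fst p) * c (fst p)) * overlap R f p)"
    unfolding sum_distrib_left using s_phase overlap_nonneg
    by (intro sum_mono) (metis mult.assoc mult.left_commute mult_right_mono)
  also have "\<dots> = Re (perm_amp (index_set T d R) \<pi> (out_state T R) (in_state T R c))"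
  proof -
    have "perm_amp (index_set T d R) \<pi> (out_state T R) (in_state T R c)
        = (\<Sum>p\<in>?A. cnj (omega T) ^ s (fst p) * c (fst p) * of_real (overlap R f p))"
      using perm_amp_twist_perm[of T "s \<circ> fst" d R f c] T s by (simp add: \<pi>_def)
    then show ?thesis by (simp add: Re_sum)
  qed
  finally show ?thesis using perm by blast
qed

lemma eventually_cos_pi_div_ge: "e > 0 \<Longrightarrow> eventually (\<lambda>T. 1 - e \<le> cos (pi / real T)) sequentially"
proof -
  assume "e > 0"
  moreover have "((\<lambda>T::nat. cos (pi / real T)) \<longlongrightarrow> 1) sequentially" by real_asymp
  ultimately have "eventually (\<lambda>T. 1 - e < cos (pi / real T)) sequentially"
    by (intro order_tendstoD(1)) auto
  then show ?thesis by (rule eventually_mono) simp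
qed

lemma eventually_ln_ratio_ge:
  "e > 0 \<Longrightarrow> eventually (\<lambda>R. real d \<le> ln (real R) \<and>
     1 - e \<le> (ln (real R) - real d) / (1 + ln (real R))) sequentially"
proof -
  assume "e > 0"
  moreover have "((\<lambda>R::nat. (ln (real R) - real d) / (1 + ln (real R))) \<longlongrightarrow> 1) sequentially"
    by real_asymp
  moreover have "eventually (\<lambda>R::nat. real d \<le> ln (real R)) sequentially" by real_asymp
  ultimately have "eventually (\<lambda>R. 1 - e < (ln (real R) - real d) / (1 + ln (real R))) sequentially"
    and "eventually (\<lambda>R::nat. real d \<le> ln (real R)) sequentially"
    by (auto intro: order_tendstoD(1))
  then show ?thesis by eventually_elim simp
qed

lemma add_minus_one_le_mult:
  fixes x y :: real
  assumes "x \<le> 1" "y \<le> 1"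
  shows "x + y - 1 \<le> x * y"
  using mult_nonneg_nonneg[of "1 - x" "1 - y"] assms by (simp add: algebra_simps)

theorem lemma3:
  fixes \<epsilon> :: real and d :: nat
  assumes "\<epsilon> > 0" and "d \<ge> 1"
  shows "\<exists>R0 T0 :: nat. \<forall>R T :: nat. R \<ge> R0 \<longrightarrow> T \<ge> T0 \<longrightarrow>
           (\<forall>c :: nat \<Rightarrow> complex. (\<Sum>j=1..d. (cmod (c j))\<^sup>2) = 1 \<longrightarrow>
             (\<exists>\<pi>. \<pi> permutes index_set T d R \<and>
                Re (perm_amp (index_set T d R) \<pi> (out_state T R) (in_state T R c)) \<ge> 1 - \<epsilon>))"
proof -
  obtain T0 where T0: "\<And>T. T \<ge> T0 \<Longrightarrow> 1 - \<epsilon> / 2 \<le> cos (pi / real T)"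
    using eventually_cos_pi_div_ge[of "\<epsilon> / 2"] assms(1) by (auto simp: eventually_sequentially)
  obtain R0 where R0: "\<And>R. R \<ge> R0 \<Longrightarrow> real d \<le> ln (real R) \<and>
      1 - \<epsilon> / 2 \<le> (ln (real R) - real d) / (1 + ln (real R))"
    using eventually_ln_ratio_ge[of "\<epsilon> / 2" d] assms(1) by (auto simp: eventually_sequentially)
  show ?thesis
  proof (rule exI[of _ "max R0 1"], rule exI[of _ "max T0 2"], intro allI impI)
    fix R T :: nat and c :: "nat \<Rightarrow> complex"
    assume R: "max R0 1 \<le> R" and T: "max T0 2 \<le> T" and c: "(\<Sum>j=1..d. (cmod (c j))\<^sup>2) = 1"
    let ?x = "cos (pi / real T)" and ?y = "(ln (real R) - real d) / (1 + ln (real R))"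
    obtain \<pi> where \<pi>: "\<pi> permutes index_set T d R"
      and bound: "?x * ?y \<le> Re (perm_amp (index_set T d R) \<pi> (out_state T R) (in_state T R c))"
      using exists_perm_amp_ge[OF assms(2) _ _ _ c] R T R0[of R] by auto
    have "0 < 1 + ln (real R)" using R by (simp add: add_pos_nonneg)
    then have "?x + ?y - 1 \<le> ?x * ?y" by (intro add_minus_one_le_mult) (simp_all add: divide_le_eq_1)
    then have "1 - \<epsilon> \<le> Re (perm_amp (index_set T d R) \<pi> (out_state T R) (in_state T R c))"
      using bound T0[of T] R0[of R] R T by linarith
    with \<pi> show "\<exists>\<pi>. \<pi> permutes index_set T d R \<and>
        1 - \<epsilon> \<le> Re (perm_amp (index_set T d R) \<pi> (out_state T R) (in_state T R c))" by blast
  qed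
qed

end
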